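(* The function $f(\gamma)=\dfrac{4^{\gamma-1}\sqrt\pi\,\Gamma(2-\gamma)}{\Gamma(\tfrac32-\gamma)}$ is strictly decreasing on $(\tfrac32,2)$. Moreover, for every $x\in(\tfrac32,2)$, $$\frac{4^{x-1}\sqrt\pi\,\Gamma(2-x)}{\Gamma(\tfrac32-x)}=2^{2x-1}-x\int_0^{1/2}t^{1-x}(1-t)^{-1-x}\,\mathrm dt.$$
   Context: $\Gamma$ denotes the Euler Gamma function (analytically continued to negative non-integer arguments). *)

theory Defs
  imports "HOL-Analysis.Analysis"
begin

definition f8 :: "real \<Rightarrow> real" where
  "f8 \<gamma> = 4 powr (\<gamma> - 1) * sqrt pi * Gamma (2 - \<gamma>) / Gamma (3/2 - \<gamma>)"

end

theory Submission
  imports Defs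
begin

text \<open>
  By Legendre's duplication formula, f(\<gamma>) = (3 - 2\<gamma>) B(2 - \<gamma>, 2 - \<gamma>). On (3/2, 2) the factor
  2\<gamma> - 3 is positive and increasing, and B(a, a) is positive and decreasing in a, so f decreases.
  For the integral formula, (3 - 2t) t^(2-\<gamma>) (1-t)^(-\<gamma>) is an antiderivative of
  \<gamma> t^(1-\<gamma>) (1-t)^(-1-\<gamma>) - 2(2\<gamma> - 3) (t(1-t))^(1-\<gamma>), and by the symmetry t \<mapsto> 1 - t the
  last term integrates over [0, 1/2] to half of B(2 - \<gamma>, 2 - \<gamma>).
\<close>

lemma Gamma_legendre_duplication_real:
  fixes a :: real
  assumes "a > 0"
  shows "Gamma a * Gamma (a + 1/2) = 2 powr (1 - 2*a) * sqrt pi * Gamma (2*a)"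
proof -
  have "complex_of_real a \<notin> \<int>\<^sub>\<le>\<^sub>0" "complex_of_real a + 1/2 \<notin> \<int>\<^sub>\<le>\<^sub>0"
    using assms by (auto elim!: nonpos_Ints_cases simp: complex_eq_iff)
  from Gamma_legendre_duplication[OF this]
  have "complex_of_real (Gamma a * Gamma (a + 1/2)) =
        complex_of_real (exp ((1 - 2*a) * ln 2) * sqrt pi * Gamma (2*a))"
    by (simp flip: Gamma_complex_of_real exp_of_real)
  then show ?thesis
    unfolding powr_def of_real_eq_iff by simp
qed

lemma Gamma_div_Gamma_minus_half_eq_Beta:
  fixes a :: real
  assumes "a > 0"
  shows "4 powr (1 - a) * sqrt pi * Gamma a / Gamma (a - 1/2) = (2*a - 1) * Beta a a"
  \<comment> \<open>At \<open>a = 1/2\<close> both sides vanish: \<open>Gamma 0 = 0\<close> and division by zero yields zero.\<close>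
proof (cases "a = 1/2")
  case False
  have "a - 1/2 \<notin> \<int>\<^sub>\<le>\<^sub>0"
  proof
    assume "a - 1/2 \<in> \<int>\<^sub>\<le>\<^sub>0"
    then obtain n :: int where "a - 1/2 = of_int n" "n \<le> 0"
      by (auto elim!: nonpos_Ints_cases)
    with assms False have "-1 < real_of_int n" "real_of_int n < 0"
      by auto
    then show False
      by simp
  qed
  then have "Gamma (a - 1/2) \<noteq> 0" and Gamma_shift: "Gamma (a + 1/2) = (a - 1/2) * Gamma (a - 1/2)"
    using Gamma_plus1[of "a - 1/2"] by (simp_all add: Gamma_eq_zero_iff add.commute)
  have "4 powr (1 - a) = (2 powr 2) powr (1 - a)"
    by simp
  also have "\<dots> = 2 powr (1 + (1 - 2*a))"
    by (simp only: powr_powr) (simp add: algebra_simps)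
  also have "\<dots> = 2 * 2 powr (1 - 2*a)"
    by (subst powr_add) simp
  finally have four_powr: "4 powr (1 - a) = 2 * 2 powr (1 - 2*a)" .
  have "Gamma (2*a) > 0"
    using assms by simp
  then have "4 powr (1 - a) * sqrt pi * Gamma a / Gamma (a - 1/2)
      = 2 * (2 powr (1 - 2*a) * sqrt pi * Gamma (2*a)) * Gamma a / (Gamma (2*a) * Gamma (a - 1/2))"
    by (simp add: four_powr)
  also have "\<dots> = 2 * (Gamma a * Gamma (a + 1/2)) * Gamma a / (Gamma (2*a) * Gamma (a - 1/2))"
    by (simp only: Gamma_legendre_duplication_real[OF assms])
  also have "\<dots> = (2*a - 1) * (Gamma a * Gamma a / Gamma (2*a))"
  proof -
    have cancel: "2 * (G * ((a - 1/2) * g)) * G / (H * g) = (2*a - 1) * (G * G / H)"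
      if "g \<noteq> 0" for G H g :: real
      using that by (cases "H = 0") (simp_all add: field_simps)
    show ?thesis
      unfolding Gamma_shift by (rule cancel) fact
  qed
  also have "\<dots> = (2*a - 1) * Beta a a"
    by (simp add: Beta_def)
  finally show ?thesis .
next
  case True
  then show ?thesis
    by (simp only:) simp
qed

lemma f8_eq_Beta:
  fixes x :: real
  assumes "x < 2"
  shows "f8 x = (3 - 2*x) * Beta (2 - x) (2 - x)"
  using Gamma_div_Gamma_minus_half_eq_Beta[of "2 - x"] assms
  by (simp add: f8_def algebra_simps)

lemma Beta_real_pos:
  fixes a b :: real
  assumes "a > 0" "b > 0"
  shows "Beta a b > 0"
  using assms by (simp add: Beta_def)

lemma f8_strict_antimono:
  fixes x y :: real
  assumes "3/2 < x" "x < y" "y < 2"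
  shows "f8 y < f8 x"
proof -
  have "(2*x - 3) * Beta (2 - x) (2 - x) < (2*y - 3) * Beta (2 - x) (2 - x)"
    using assms Beta_real_pos[of "2 - x" "2 - x"] by simp
  also have "\<dots> \<le> (2*y - 3) * Beta (2 - y) (2 - y)"
    using assms by (intro mult_left_mono Beta_real_mono) auto
  finally show ?thesis
    using assms by (simp add: f8_eq_Beta algebra_simps)
qed

lemma has_integral_Beta_half:
  fixes a :: real
  assumes "a > 0"
  shows "((\<lambda>t. t powr (a - 1) * (1 - t) powr (a - 1)) has_integral Beta a a / 2) {0..1/2}"
proof -
  define q where "q t = t powr (a - 1) * (1 - t) powr (a - 1)" for t :: real
  have B: "(q has_integral Beta a a) {0..1}"
    unfolding q_def using has_integral_Beta_real[OF assms assms] .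
  have "q integrable_on {0..1/2}"
    by (rule integrable_subinterval_real[OF has_integral_integrable[OF B]]) auto
  then obtain I where I: "(q has_integral I) {0..1/2}"
    by blast
  have "q (1 - t) = q t" for t
    by (simp add: q_def)
  then have "((\<lambda>t. q (1 - t)) has_integral I) {0..1/2}"
    using I by simp
  from has_integral_shift_real_ivl[OF this, of 1]
  have "(q has_integral I) {1/2..1}"
    by simp
  with I have "(q has_integral (I + I)) {0..1}"
    by (rule has_integral_combine[rotated 2]) auto
  with B have "I + I = Beta a a"
    by (rule has_integral_unique[rotated])
  then have "I = Beta a a / 2"
    by simp
  with I show ?thesis
    unfolding q_def by simp
qed

lemma has_real_derivative_powr_antiderivative:
  fixes x t :: real
  assumes "0 < t" "t < 1"
  shows "((\<lambda>t. (3 - 2*t) * t powr (2 - x) * (1 - t) powr (-x)) has_real_derivative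
      x * (t powr (1 - x) * (1 - t) powr (-1 - x)) - 2*(2*x - 3) * (t powr (1 - x) * (1 - t) powr (1 - x)))
    (at t)"
proof -
  define u where "u = t powr (1 - x)"
  define v where "v = (1 - t) powr (-1 - x)"
  have powr_eqs: "t powr (2 - x) = t * u" "(1 - t) powr (-x) = (1 - t) * v"
      "(1 - t) powr (1 - x) = (1 - t)^2 * v"
    using assms by (simp_all add: u_def v_def power2_eq_square powr_mult_base mult.assoc
        flip: powr_add)
  have v_alt: "(1 - t) powr (-x - 1) = v"
    unfolding v_def by (rule arg_cong[where f = "\<lambda>e. (1 - t) powr e"]) simp
  show ?thesis
  proof (rule DERIV_cong)
    show "((\<lambda>t. (3 - 2*t) * t powr (2 - x) * (1 - t) powr (-x)) has_real_derivative
        ((2 - x) * t powr (1 - x) * (3 - 2*t) - 2 * t powr (2 - x)) * (1 - t) powr (-x)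
        + x * (1 - t) powr (-x - 1) * ((3 - 2*t) * t powr (2 - x))) (at t)"
      using assms by (auto intro!: derivative_eq_intros)
    show "((2 - x) * t powr (1 - x) * (3 - 2*t) - 2 * t powr (2 - x)) * (1 - t) powr (-x)
        + x * (1 - t) powr (-x - 1) * ((3 - 2*t) * t powr (2 - x))
      = x * (t powr (1 - x) * (1 - t) powr (-1 - x)) - 2*(2*x - 3) * (t powr (1 - x) * (1 - t) powr (1 - x))"
      unfolding powr_eqs v_alt u_def [symmetric] v_def [symmetric]
      by (simp add: algebra_simps power2_eq_square)
  qed
qed

lemma has_integral_powr_combination_half:
  fixes x :: real
  assumes "x < 2"
  shows "((\<lambda>t. x * (t powr (1 - x) * (1 - t) powr (-1 - x))
      - 2*(2*x - 3) * (t powr (1 - x) * (1 - t) powr (1 - x))) has_integral 2 powr (2*x - 1)) {0..1/2}"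
proof -
  define G where "G = (\<lambda>t::real. (3 - 2*t) * t powr (2 - x) * (1 - t) powr (-x))"
  have "continuous_on {0..1/2} G"
    unfolding G_def using assms by (intro continuous_intros continuous_on_powr') auto
  moreover have "G 0 = 0"
    by (simp add: G_def)
  moreover have "G (1/2) = 2 powr (2*x - 1)"
  proof -
    have "G (1/2) = 2 * (1/2) powr (2 - 2*x)"
      by (simp add: G_def mult.assoc flip: powr_add)
    also have "\<dots> = 2 powr 1 * 2 powr (2*x - 2)"
      by (simp add: powr_divide powr_minus_divide [symmetric])
    also have "\<dots> = 2 powr (2*x - 1)"
      by (simp only: powr_add [symmetric]) simp
    finally show ?thesis .
  qed
  moreover have "(G has_vector_derivative x * (t powr (1 - x) * (1 - t) powr (-1 - x))
      - 2*(2*x - 3) * (t powr (1 - x) * (1 - t) powr (1 - x))) (at t)" if "t \<in> {0<..<1/2}" for t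
    using has_real_derivative_powr_antiderivative[of t x] that
    unfolding G_def has_real_derivative_iff_has_vector_derivative by simp
  ultimately show ?thesis
    using fundamental_theorem_of_calculus_interior[of 0 "1/2" G] by simp
qed

lemma has_integral_powr_mult_powr_half:
  fixes x :: real
  assumes "0 < x" "x < 2"
  shows "((\<lambda>t. t powr (1 - x) * (1 - t) powr (-1 - x)) has_integral
      (2 powr (2*x - 1) + (2*x - 3) * Beta (2 - x) (2 - x)) / x) {0..1/2}"
proof -
  have Beta_term: "2*(2*x - 3) * (Beta (2 - x) (2 - x) / 2) = (2*x - 3) * Beta (2 - x) (2 - x)"
    by simp
  have "((\<lambda>t. t powr (1 - x) * (1 - t) powr (1 - x)) has_integral Beta (2 - x) (2 - x) / 2) {0..1/2}"
    using has_integral_Beta_half[of "2 - x"] assms by simp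
  from has_integral_mult_right[OF this, of "2*(2*x - 3)"]
  have "((\<lambda>t. 2*(2*x - 3) * (t powr (1 - x) * (1 - t) powr (1 - x))) has_integral
      (2*x - 3) * Beta (2 - x) (2 - x)) {0..1/2}"
    by (simp only: Beta_term)
  from has_integral_add[OF has_integral_powr_combination_half[OF assms(2)] this]
  have "((\<lambda>t. x * (t powr (1 - x) * (1 - t) powr (-1 - x))) has_integral
      2 powr (2*x - 1) + (2*x - 3) * Beta (2 - x) (2 - x)) {0..1/2}"
    by (simp only: diff_add_cancel)
  then show ?thesis
    using assms by (simp add: has_integral_mult_right_iff)
qed

theorem lemma8p4:
  shows "(\<forall>x\<in>{3/2<..<2::real}. \<forall>y\<in>{3/2<..<2::real}. x < y \<longrightarrow> f8 y < f8 x)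
    \<and> (\<forall>x\<in>{3/2<..<2::real}.
          (\<lambda>t. t powr (1 - x) * (1 - t) powr (-1 - x)) integrable_on {0..1/2}
        \<and> f8 x = 2 powr (2*x - 1)
            - x * integral {0..1/2} (\<lambda>t. t powr (1 - x) * (1 - t) powr (-1 - x)))"
proof (intro conjI ballI impI)
  fix x y :: real
  assume "x \<in> {3/2<..<2}" "y \<in> {3/2<..<2}" "x < y"
  then show "f8 y < f8 x"
    by (intro f8_strict_antimono) auto
next
  fix x :: real
  assume x: "x \<in> {3/2<..<2}"
  then have integral: "((\<lambda>t. t powr (1 - x) * (1 - t) powr (-1 - x)) has_integral
      (2 powr (2*x - 1) + (2*x - 3) * Beta (2 - x) (2 - x)) / x) {0..1/2}"
    by (intro has_integral_powr_mult_powr_half) auto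
  then show "(\<lambda>t. t powr (1 - x) * (1 - t) powr (-1 - x)) integrable_on {0..1/2}"
    by blast
  from x integral_unique[OF integral]
  have "x * integral {0..1/2} (\<lambda>t. t powr (1 - x) * (1 - t) powr (-1 - x))
      = 2 powr (2*x - 1) + (2*x - 3) * Beta (2 - x) (2 - x)"
    by simp
  with x show "f8 x = 2 powr (2*x - 1) - x * integral {0..1/2} (\<lambda>t. t powr (1 - x) * (1 - t) powr (-1 - x))"
    by (simp add: f8_eq_Beta algebra_simps)
qed

end
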